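(* For any $k, J \in \mathbb{N}$ with $2ek < J$, and for each choice of activation $\sigma \in \{\exp, \sinh, \sin\}$, there exists a shallow (one-hidden-layer) neural network $f^{(k)} : \mathbb{C} \to \mathbb{C}$ using activation $\sigma$, with $O(J)$ neurons and weights of size $O(k)$, such that $$\sup_{|\xi| \leq 2} \left| f^{(k)}(\xi) - \xi^k \right| \leq 2 \left( \frac{2ek}{J} \right)^J.$$
   Context: A shallow neural network with activation $\sigma$ here means a function of the form $\xi \mapsto \sum_{j} a_j \sigma(w_j \xi + b_j)$ with complex weights $a_j, w_j, b_j$; the number of neurons is the number of summands. *)

theory Defs
  imports "HOL-Analysis.Analysis"
begin

definition shallow_nn :: "(complex \<Rightarrow> complex) \<Rightarrow> (complex \<times> complex \<times> complex) list \<Rightarrow> complex \<Rightarrow> complex" where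
  "shallow_nn \<sigma> ps \<xi> = (\<Sum>(a, w, b)\<leftarrow>ps. a * \<sigma> (w * \<xi> + b))"

end

theory Submission
  imports Defs
begin

text \<open>With \<open>\<omega>\<close> a primitive \<open>N\<close>-th root of unity, the average of
  \<open>\<omega>^(-jk) exp (k \<omega>^j \<xi>)\<close> over \<open>j < N\<close> keeps exactly the terms \<open>(k \<xi>)^m / m!\<close> of the
  exponential series with \<open>m \<equiv> k (mod N)\<close>. Scaled by \<open>k! / k^k\<close>, the term \<open>m = k\<close> is
  \<open>\<xi>^k\<close> and all other terms have \<open>m \<ge> N\<close>. For \<open>|\<xi>| \<le> 2\<close> and \<open>N \<ge> 4k\<close> they are
  dominated by a geometric series, so the error is at most \<open>2 (2k)^N / N! \<le> 2 (2ek/N)^N\<close>,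
  which for \<open>N = 2J\<close> is at most \<open>2 (2ek/J)^J\<close>. Each \<open>exp\<close> neuron can then be traded for
  two \<open>sinh\<close> neurons (as \<open>exp = sinh + cosh\<close>) or two \<open>sin\<close> neurons (Euler's formula).\<close>

definition unit_root :: "nat \<Rightarrow> complex" where
  "unit_root N = exp (2 * pi * \<i> / N)"

lemma unit_root_power_eq_1_iff:
  assumes "0 < N"
  shows "unit_root N ^ d = 1 \<longleftrightarrow> N dvd d"
proof -
  have "unit_root N ^ d = exp (2 * pi * \<i> * d / N)"
    unfolding unit_root_def by (simp flip: exp_of_nat_mult add: field_simps)
  then show ?thesis
    using complex_root_unity_eq_1[of N d] assms by simp
qed

lemma sum_unit_root_powers:
  assumes "0 < N"
  shows "(\<Sum>j<N. (unit_root N ^ d) ^ j) = (if N dvd d then of_nat N else 0)"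
proof (cases "N dvd d")
  case False
  have "(unit_root N ^ d) ^ N = (unit_root N ^ N) ^ d"
    by (simp flip: power_mult add: mult.commute)
  also have "\<dots> = 1"
    using unit_root_power_eq_1_iff[OF assms, of N] by simp
  finally show ?thesis
    using False unit_root_power_eq_1_iff[OF assms] by (simp add: geometric_sum)
next
  case True
  then show ?thesis
    using unit_root_power_eq_1_iff[OF assms, of d] by simp
qed

lemma norm_unit_root [simp]: "norm (unit_root N) = 1"
  by (simp add: unit_root_def norm_exp_eq_Re)

lemma power_div_fact_le_geometric:
  fixes t :: real
  assumes "0 \<le> t" "2 * t \<le> N" "N \<le> m"
  shows "t ^ m / fact m \<le> t ^ N / fact N * (1/2) ^ (m - N)"
  using assms(3)
proof (induction m rule: dec_induct)
  case (step m)
  have "t ^ Suc m / fact (Suc m) = t ^ m / fact m * (t / Suc m)"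
    by (simp add: field_simps)
  also have "\<dots> \<le> t ^ N / fact N * (1/2) ^ (m - N) * (1/2)"
    using step assms by (intro mult_mono) (auto simp: field_simps)
  also have "\<dots> = t ^ N / fact N * (1/2) ^ (Suc m - N)"
    using step(1) by (simp add: Suc_diff_le)
  finally show ?case .
qed simp

lemma sums_norm_le_exp_tail:
  fixes g :: "nat \<Rightarrow> 'a::banach"
  assumes "g sums s" and "\<And>m. m < N \<Longrightarrow> g m = 0"
    and "\<And>m. norm (g m) \<le> t ^ m / fact m" and "0 \<le> t" "2 * t \<le> N"
  shows "norm s \<le> 2 * (t ^ N / fact N)"
proof -
  define h where "h m = (if m < N then 0 else t ^ N / fact N * (1/2) ^ (m - N))" for m
  have "(\<lambda>i. h (i + N)) sums (t ^ N / fact N * 2)"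
    using sums_mult[OF geometric_sums[of "1/2::real"], of "t ^ N / fact N"] by (simp add: h_def)
  moreover have "(\<Sum>i<N. h i) = 0"
    by (simp add: h_def)
  ultimately have h_sums: "h sums (2 * (t ^ N / fact N))"
    by (simp add: sums_iff_shift mult.commute)
  have "norm (g m) \<le> h m" for m
    using assms(2-5) power_div_fact_le_geometric[of t N m] order_trans[OF assms(3)]
    by (auto simp: h_def)
  then have "norm (suminf g) \<le> suminf h"
    using h_sums by (intro norm_suminf_le) (auto simp: sums_iff)
  then show ?thesis
    using assms(1) h_sums by (simp add: sums_iff)
qed

lemma power_div_fact_le_exp:
  fixes x :: real
  assumes "0 \<le> x"
  shows "x ^ n / fact n \<le> exp x"
proof -
  have "(\<Sum>m\<in>{n}. x ^ m /\<^sub>R fact m) \<le> (\<Sum>m. x ^ m /\<^sub>R fact m)"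
    using assms by (intro sum_le_suminf) (auto intro: summable_exp)
  then show ?thesis
    by (simp add: exp_def divide_inverse_commute)
qed

lemma power_div_fact_le:
  fixes t :: real
  assumes "0 \<le> t"
  shows "t ^ n / fact n \<le> (exp 1 * t / n) ^ n"
proof (cases "n = 0")
  case False
  have "t ^ n / fact n = (t / n) ^ n * (real n ^ n / fact n)"
    using False by (simp add: power_divide)
  also have "\<dots> \<le> (t / n) ^ n * exp 1 ^ n"
    using assms power_div_fact_le_exp[of n n]
    by (intro mult_left_mono) (auto simp flip: exp_of_nat_mult)
  also have "\<dots> = (exp 1 * t / n) ^ n"
    by (simp flip: power_mult_distrib add: mult_ac)
  finally show ?thesis .
qed simp

lemma fact_div_self_power_le_1: "fact k / real k ^ k \<le> 1"
proof -
  have "0 < real k ^ k"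
    by (cases "k = 0") simp_all
  moreover have "fact k \<le> real k ^ k"
    using fact_le_power[of k, where 'a=real] by simp
  ultimately show ?thesis
    by (simp add: divide_le_eq_1_pos)
qed

text \<open>The factor \<open>unit_root N ^ (j * (N - k))\<close> is \<open>\<omega>^(-jk)\<close> without a negative exponent.\<close>

definition monomial_exp_net :: "nat \<Rightarrow> nat \<Rightarrow> (complex \<times> complex \<times> complex) list" where
  "monomial_exp_net k N =
     map (\<lambda>j. (of_real (fact k / (k ^ k * N)) * unit_root N ^ (j * (N - k)), k * unit_root N ^ j, 0))
       [0..<N]"

lemma length_monomial_exp_net [simp]: "length (monomial_exp_net k N) = N"
  by (simp add: monomial_exp_net_def)

lemma monomial_exp_net_weights:
  assumes "(a, w, b) \<in> set (monomial_exp_net k N)"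
  shows "norm a \<le> 1" "norm w \<le> k" "b = 0"
proof -
  obtain j where j: "j < N" "a = of_real (fact k / (k ^ k * N)) * unit_root N ^ (j * (N - k))"
    "w = k * unit_root N ^ j" "b = 0"
    using assms by (auto simp: monomial_exp_net_def)
  have "fact k / (real k ^ k * N) = fact k / real k ^ k / N"
    by simp
  also have "\<dots> \<le> 1"
  proof -
    have "y / N \<le> 1" if "y \<le> 1" for y :: real
      using that j(1) by (simp add: divide_le_eq_1)
    then show ?thesis
      using fact_div_self_power_le_1 .
  qed
  finally show "norm a \<le> 1" "norm w \<le> k" "b = 0"
    unfolding j norm_mult norm_of_real norm_power by simp_all
qed

lemma shallow_nn_monomial_exp_net_sums:
  assumes "k < N"
  shows "(\<lambda>m. if m mod N = k then of_real (fact k / real k ^ k) * (k * \<xi>) ^ m / fact m else 0)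
           sums shallow_nn exp (monomial_exp_net k N) \<xi>"
proof -
  define c where "c = complex_of_real (fact k / (k ^ k * N))"
  define \<omega> where "\<omega> = unit_root N"
  have net: "shallow_nn exp (monomial_exp_net k N) \<xi> = (\<Sum>j<N. c * \<omega> ^ (j * (N - k)) * exp (k * \<omega> ^ j * \<xi>))"
    by (simp add: shallow_nn_def monomial_exp_net_def c_def \<omega>_def atLeast0LessThan
        flip: sum_set_upt_conv_sum_list_nat)
  have series: "(\<lambda>m. \<Sum>j<N. c * \<omega> ^ (j * (N - k)) * ((k * \<omega> ^ j * \<xi>) ^ m /\<^sub>R fact m))
          sums shallow_nn exp (monomial_exp_net k N) \<xi>"
    unfolding net by (intro sums_sum sums_mult exp_converges)
  have coefficient: "(\<Sum>j<N. c * \<omega> ^ (j * (N - k)) * ((k * \<omega> ^ j * \<xi>) ^ m /\<^sub>R fact m))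
      = (if m mod N = k then of_real (fact k / real k ^ k) * (k * \<xi>) ^ m / fact m else 0)" for m
  proof -
    have "c * \<omega> ^ (j * (N - k)) * ((k * \<omega> ^ j * \<xi>) ^ m /\<^sub>R fact m)
          = c * (k * \<xi>) ^ m / fact m * (\<omega> ^ (m + N - k)) ^ j" for j
    proof -
      have "\<omega> ^ (j * (N - k)) * (\<omega> ^ j) ^ m = (\<omega> ^ (m + N - k)) ^ j"
        using assms by (simp add: power_mult[symmetric] power_add[symmetric] algebra_simps)
      then show ?thesis
        by (simp add: scaleR_conv_of_real power_mult_distrib field_simps)
    qed
    then have "(\<Sum>j<N. c * \<omega> ^ (j * (N - k)) * ((k * \<omega> ^ j * \<xi>) ^ m /\<^sub>R fact m))
               = c * (k * \<xi>) ^ m / fact m * (\<Sum>j<N. (\<omega> ^ (m + N - k)) ^ j)"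
      by (simp add: sum_distrib_left)
    also have "\<dots> = c * (k * \<xi>) ^ m / fact m * (if N dvd (m + N - k) then of_nat N else 0)"
      using assms unfolding \<omega>_def by (simp add: sum_unit_root_powers)
    also have "N dvd (m + N - k) \<longleftrightarrow> m mod N = k"
      using assms by (metis dvd_minus_mod mod_add_self2 mod_nat_eqI nat_less_le trans_le_add2)
    finally show ?thesis
      using assms by (simp add: c_def field_simps)
  qed
  show ?thesis
    using series unfolding coefficient .
qed

lemma monomial_exp_net_error:
  assumes "k < N" "2 * (k * r) \<le> N" "norm \<xi> \<le> r"
  shows "norm (shallow_nn exp (monomial_exp_net k N) \<xi> - \<xi> ^ k) \<le> 2 * ((k * r) ^ N / fact N)"
proof -
  have r_nonneg: "0 \<le> r"
    using assms(3) norm_ge_zero order_trans by blast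
  define a where "a m = (if m mod N = k then of_real (fact k / real k ^ k) * (k * \<xi>) ^ m / fact m else 0)"
    for m
  define g where "g m = a m - (if m = k then \<xi> ^ k else 0)" for m
  have "a k = \<xi> ^ k"
  proof -
    have "(of_nat k :: complex) ^ k \<noteq> 0"
      by (cases "k = 0") simp_all
    then show ?thesis
      using assms(1) by (simp add: a_def power_mult_distrib)
  qed
  then have low: "g m = 0" if "m < N" for m
    using that by (auto simp: g_def a_def)
  have g_sums: "g sums (shallow_nn exp (monomial_exp_net k N) \<xi> - \<xi> ^ k)"
    unfolding g_def a_def
    by (intro sums_diff shallow_nn_monomial_exp_net_sums assms(1) sums_single)
  have g_bound: "norm (g m) \<le> (k * r) ^ m / fact m" for m
  proof (cases "m < N")
    case False
    have "norm (g m) \<le> fact k / real k ^ k * (k * norm \<xi>) ^ m / fact m"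
      using False assms(1) by (auto simp: g_def a_def norm_mult norm_divide norm_power)
    also have "\<dots> \<le> (k * r) ^ m / fact m"
    proof (rule divide_right_mono)
      have "(k * norm \<xi>) ^ m \<le> (k * r) ^ m"
        using assms(3) by (intro power_mono mult_left_mono) auto
      then show "fact k / real k ^ k * (k * norm \<xi>) ^ m \<le> (k * r) ^ m"
        using fact_div_self_power_le_1[of k] by (intro order_trans[OF mult_left_le_one_le]) auto
    qed simp
    finally show ?thesis .
  qed (use low r_nonneg in simp)
  show ?thesis
    using sums_norm_le_exp_tail[OF g_sums low g_bound _ assms(2)] r_nonneg by simp
qed

lemma monomial_exp_net_approx:
  assumes J: "2 * exp 1 * k < J" and \<xi>: "norm \<xi> \<le> 2"
  shows "norm (shallow_nn exp (monomial_exp_net k (2 * J)) \<xi> - \<xi> ^ k) \<le> 2 * (2 * exp 1 * k / J) ^ J"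
proof -
  have "2 \<le> exp (1::real)"
    using exp_ge_add_one_self[of 1] by simp
  then have "2 * real k \<le> 2 * exp 1 * k"
    by (intro mult_right_mono) auto
  then have "k < J" "2 * k \<le> J"
    using J by linarith+
  define x where "x = exp 1 * k / J"
  have "0 \<le> x" "x \<le> 2"
    using J \<open>k < J\<close> by (auto simp: x_def field_simps)
  have "(real k * 2) ^ (2 * J) / fact (2 * J) \<le> (exp 1 * (real k * 2) / real (2 * J)) ^ (2 * J)"
    by (rule power_div_fact_le) simp
  also have "\<dots> = (x ^ 2) ^ J"
    by (simp add: x_def mult.commute flip: power_mult)
  also have "\<dots> \<le> (2 * x) ^ J"
    using \<open>0 \<le> x\<close> \<open>x \<le> 2\<close> by (intro power_mono) (auto simp: power2_eq_square mult_right_mono)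
  finally have "(real k * 2) ^ (2 * J) / fact (2 * J) \<le> (2 * exp 1 * k / J) ^ J"
    by (simp add: x_def mult.assoc)
  moreover have "norm (shallow_nn exp (monomial_exp_net k (2 * J)) \<xi> - \<xi> ^ k)
      \<le> 2 * ((real k * 2) ^ (2 * J) / fact (2 * J))"
    using \<open>k < J\<close> \<open>2 * k \<le> J\<close> \<xi> by (intro monomial_exp_net_error) auto
  ultimately show ?thesis
    by simp
qed

definition substitute_activation ::
    "(complex \<times> complex \<times> complex) list \<Rightarrow> (complex \<times> complex \<times> complex) list
       \<Rightarrow> (complex \<times> complex \<times> complex) list" where
  "substitute_activation R ps =
     concat (map (\<lambda>(a, w, b). map (\<lambda>(c, v, d). (a * c, v * w, v * b + d)) R) ps)"

lemma length_substitute_activation [simp]: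
  "length (substitute_activation R ps) = length R * length ps"
  by (induction ps) (auto simp: substitute_activation_def)

lemma shallow_nn_substitute_activation:
  assumes "\<And>z. \<tau> z = shallow_nn \<sigma> R z"
  shows "shallow_nn \<sigma> (substitute_activation R ps) \<xi> = shallow_nn \<tau> ps \<xi>"
proof (induction ps)
  case (Cons p ps)
  obtain a w b where p: "p = (a, w, b)"
    by (cases p) auto
  have "shallow_nn \<sigma> (map (\<lambda>(c, v, d). (a * c, v * w, v * b + d)) R) \<xi> = a * \<tau> (w * \<xi> + b)"
    unfolding assms shallow_nn_def
    by (induction R) (auto simp: algebra_simps)
  with Cons show ?case
    by (simp add: p substitute_activation_def shallow_nn_def)
qed (simp add: substitute_activation_def shallow_nn_def)

lemma substitute_activation_weights:
  assumes "\<forall>(a, w, b) \<in> set ps. norm a \<le> A \<and> norm w \<le> W \<and> norm b \<le> B"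
    and "\<forall>(c, v, d) \<in> set R. norm c \<le> 1 \<and> norm v \<le> 1 \<and> norm d \<le> D"
  shows "\<forall>(a, w, b) \<in> set (substitute_activation R ps). norm a \<le> A \<and> norm w \<le> W \<and> norm b \<le> B + D"
proof (clarsimp simp: substitute_activation_def)
  fix a w b c v d
  assume "(a, w, b) \<in> set ps" "(c, v, d) \<in> set R"
  then have "norm a \<le> A" "norm w \<le> W" "norm b \<le> B" "norm c \<le> 1" "norm v \<le> 1" "norm d \<le> D"
    using assms by auto
  moreover have "norm (v * b + d) \<le> norm v * norm b + norm d"
    by (metis norm_mult norm_triangle_ineq)
  ultimately show "norm (a * c) \<le> A \<and> norm (v * w) \<le> W \<and> norm (v * b + d) \<le> B + D"
    unfolding norm_mult
    by (smt (verit) mult_left_le_one_le mult_right_le_one_le norm_ge_zero mult_mono)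
qed

lemma exp_eq_sinh_combination: "exp z = sinh z - \<i> * sinh (z + \<i> * pi / 2)"
proof -
  have i: "exp (\<i> * pi / 2) = \<i>"
    by (simp add: exp_eq_polar cis_conv_exp[symmetric] cis.ctr complex_eq_iff)
  then have "exp (- (\<i> * pi / 2)) = - \<i>"
    by (simp add: exp_minus)
  then have "exp (z + \<i> * pi / 2) = \<i> * exp z" "exp (- (z + \<i> * pi / 2)) = - \<i> * exp (- z)"
    using i by (simp_all only: minus_add_distrib exp_add) simp_all
  then have "sinh (z + \<i> * pi / 2) = \<i> * cosh z"
    unfolding sinh_def cosh_def by (simp add: algebra_simps scaleR_conv_of_real)
  then show ?thesis
    by (simp add: sinh_plus_cosh)
qed

lemma exp_eq_sin_combination: "exp z = sin (- \<i> * z + pi / 2) + \<i> * sin (- \<i> * z)"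
proof -
  have "sin (- \<i> * z + pi / 2) = cos (- \<i> * z)"
    by (subst sin_add) simp
  then show ?thesis
    using exp_Euler[of "- \<i> * z"] by simp
qed

lemma exp_realizable:
  assumes "\<sigma> \<in> {exp, sinh, sin}"
  obtains R where "length R \<le> 2" "\<forall>(c, v, d) \<in> set R. norm c \<le> 1 \<and> norm v \<le> 1 \<and> norm d \<le> 2"
    "\<And>z. exp z = shallow_nn \<sigma> R z"
proof -
  have "norm (\<i> * pi / 2) \<le> 2" "norm (complex_of_real pi / 2) \<le> 2"
    using pi_less_4 by (simp_all add: norm_mult norm_divide)
  then consider "\<sigma> = exp" | "\<sigma> = sinh" | "\<sigma> = sin"
    using assms by auto
  then show ?thesis
  proof cases
    case 1
    then show ?thesis
      by (intro that[of "[(1, 1, 0)]"]) (simp_all add: shallow_nn_def)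
  next
    case 2
    then show ?thesis
      using \<open>norm (\<i> * pi / 2) \<le> 2\<close>
      by (intro that[of "[(1, 1, 0), (- \<i>, 1, \<i> * pi / 2)]"])
        (simp_all add: shallow_nn_def exp_eq_sinh_combination)
  next
    case 3
    then show ?thesis
      using \<open>norm (complex_of_real pi / 2) \<le> 2\<close>
      by (intro that[of "[(1, - \<i>, pi / 2), (\<i>, - \<i>, 0)]"])
        (simp_all add: shallow_nn_def exp_eq_sin_combination)
  qed
qed

theorem lemma2:
  "\<exists>C::real. C > 0 \<and>
     (\<forall>\<sigma> \<in> {exp, sinh, sin :: complex \<Rightarrow> complex}. \<forall>k J :: nat.
        2 * exp 1 * real k < real J \<longrightarrow>
        (\<exists>ps :: (complex \<times> complex \<times> complex) list.
            real (length ps) \<le> C * real J \<and>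
            (\<forall>(a, w, b) \<in> set ps. norm a \<le> C * (real k + 1) \<and> norm w \<le> C * (real k + 1)
                                   \<and> norm b \<le> C * (real k + 1)) \<and>
            (\<forall>\<xi>::complex. norm \<xi> \<le> 2 \<longrightarrow>
               norm (shallow_nn \<sigma> ps \<xi> - \<xi> ^ k) \<le> 2 * (2 * exp 1 * real k / real J) ^ J)))"
proof (intro exI[of _ 4] conjI ballI allI impI)
  fix \<sigma> :: "complex \<Rightarrow> complex" and k J :: nat
  assume \<sigma>: "\<sigma> \<in> {exp, sinh, sin}" and J: "2 * exp 1 * real k < real J"
  obtain R where R: "length R \<le> 2" "\<forall>(c, v, d) \<in> set R. norm c \<le> 1 \<and> norm v \<le> 1 \<and> norm d \<le> 2"
    "\<And>z. exp z = shallow_nn \<sigma> R z"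
    using exp_realizable[OF \<sigma>] by blast
  define ps where "ps = substitute_activation R (monomial_exp_net k (2 * J))"
  have "\<forall>(a, w, b) \<in> set (monomial_exp_net k (2 * J)). norm a \<le> 1 \<and> norm w \<le> k \<and> norm b \<le> 0"
    using monomial_exp_net_weights by fastforce
  from substitute_activation_weights[OF this R(2)]
  have "\<forall>(a, w, b) \<in> set ps. norm a \<le> 4 * (real k + 1) \<and> norm w \<le> 4 * (real k + 1)
                                   \<and> norm b \<le> 4 * (real k + 1)"
    unfolding ps_def by fastforce
  moreover have "length ps \<le> 4 * J"
    using R(1) by (simp add: ps_def)
  then have "real (length ps) \<le> 4 * real J"
    by simp
  moreover have "norm (shallow_nn \<sigma> ps \<xi> - \<xi> ^ k) \<le> 2 * (2 * exp 1 * real k / real J) ^ J"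
    if "norm \<xi> \<le> 2" for \<xi>
    using monomial_exp_net_approx[OF J that] shallow_nn_substitute_activation[OF R(3)]
    by (simp add: ps_def)
  ultimately show "\<exists>ps. real (length ps) \<le> 4 * real J \<and>
            (\<forall>(a, w, b) \<in> set ps. norm a \<le> 4 * (real k + 1) \<and> norm w \<le> 4 * (real k + 1)
                                   \<and> norm b \<le> 4 * (real k + 1)) \<and>
            (\<forall>\<xi>::complex. norm \<xi> \<le> 2 \<longrightarrow>
               norm (shallow_nn \<sigma> ps \<xi> - \<xi> ^ k) \<le> 2 * (2 * exp 1 * real k / real J) ^ J)"
    by blast
qed simp

end
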